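(* Let $M$ be an $n$-quasi-paving matroid of rank $n$. Then $M$ arises from a tame paving matroid by successive principal extensions along flats of rank $n-2$; that is, there exist a tame paving matroid $M_0$ and matroids $M_1,\ldots,M_r=M$ ($r\ge 0$) such that for each $i\in[r]$, $M_i=M_{i-1}+_{F_i}a_i$ for some flat $F_i$ of $M_{i-1}$ of rank $n-2$ and some new element $a_i$.
   Context: Quasi-paving construction: given a positive integer $n\le d$ and a collection $\mathcal{H}=\{H_1,\ldots,H_k\}$ of subsets of $[d]$ any three of which have empty intersection, the $n$-quasi-paving matroid with representation $\mathcal{H}$ is the matroid on $[d]$ whose circuits are: (Type 1) the $(n-1)$-element subsets contained in the intersection of two distinct members of $\mathcal{H}$; (Type 2) the $n$-element subsets of some $H_i$ containing no Type 1 set; (Type 3) the $(n+1)$-element subsets containing no Type 1 or Type 2 set. An $n$-quasi-paving matroid is one arising in this way (its rank need not be $n$). A paving matroid of rank $n$ is one all of whose circuits have size $n$ or $n+1$; a dependent hyperplane is a maximal set of size at least $n$ all of whose $n$-subsets are circuits; a paving matroid is tame if any three distinct dependent hyperplanes have empty intersection. Principal extension: if $M'$ is a matroid on $E'$, $F$ a flat of $M'$ and $a\notin E'$, then $M'+_F a$ is the matroid on $E'\cup\{a\}$ with bases $\mathcal{B}(M')\cup\{(\lambda\setminus\{b\})\cup\{a\}:\lambda\in\mathcal{B}(M'),\ b\in\lambda\cap F\}$. *)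

theory Defs
  imports Main
begin

type_synonym matroid = "nat set \<times> nat set set"

definition ground :: "matroid \<Rightarrow> nat set" where "ground M = fst M"
definition bases :: "matroid \<Rightarrow> nat set set" where "bases M = snd M"

definition is_matroid :: "matroid \<Rightarrow> bool" where
  "is_matroid M \<longleftrightarrow> finite (ground M) \<and> bases M \<noteq> {} \<and>
     (\<forall>X\<in>bases M. X \<subseteq> ground M) \<and>
     (\<forall>B1\<in>bases M. \<forall>B2\<in>bases M. \<forall>x\<in>B1 - B2.
        \<exists>y\<in>B2 - B1. insert y (B1 - {x}) \<in> bases M)"

definition indep :: "matroid \<Rightarrow> nat set \<Rightarrow> bool" where
  "indep M X \<longleftrightarrow> (\<exists>B\<in>bases M. X \<subseteq> B)"

definition circuits :: "matroid \<Rightarrow> nat set set" where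
  "circuits M = {C. C \<subseteq> ground M \<and> \<not> indep M C \<and> (\<forall>D. D \<subset> C \<longrightarrow> indep M D)}"

definition rk :: "matroid \<Rightarrow> nat set \<Rightarrow> nat" where
  "rk M X = Max {card I | I. I \<subseteq> X \<and> indep M I}"

definition matroid_rank :: "matroid \<Rightarrow> nat" where
  "matroid_rank M = rk M (ground M)"

definition flat :: "matroid \<Rightarrow> nat set \<Rightarrow> bool" where
  "flat M F \<longleftrightarrow> F \<subseteq> ground M \<and> (\<forall>e\<in>ground M - F. rk M (insert e F) > rk M F)"

definition principal_ext :: "matroid \<Rightarrow> nat set \<Rightarrow> nat \<Rightarrow> matroid" where
  "principal_ext M F a = (insert a (ground M),
     bases M \<union> {insert a (L - {b}) | L b. L \<in> bases M \<and> b \<in> L \<inter> F})"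

definition qp_type1 :: "nat \<Rightarrow> nat set set \<Rightarrow> nat set set" where
  "qp_type1 n H = {X. card X = n - 1 \<and> (\<exists>H1\<in>H. \<exists>H2\<in>H. H1 \<noteq> H2 \<and> X \<subseteq> H1 \<inter> H2)}"

definition qp_type2 :: "nat \<Rightarrow> nat set set \<Rightarrow> nat set set" where
  "qp_type2 n H = {X. card X = n \<and> (\<exists>Hi\<in>H. X \<subseteq> Hi) \<and> (\<forall>Y\<in>qp_type1 n H. \<not> Y \<subseteq> X)}"

definition qp_type3 :: "nat \<Rightarrow> nat \<Rightarrow> nat set set \<Rightarrow> nat set set" where
  "qp_type3 d n H = {X. X \<subseteq> {1..d} \<and> card X = n + 1 \<and>
      (\<forall>Y\<in>qp_type1 n H \<union> qp_type2 n H. \<not> Y \<subseteq> X)}"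

definition qp_circuits :: "nat \<Rightarrow> nat \<Rightarrow> nat set set \<Rightarrow> nat set set" where
  "qp_circuits d n H = qp_type1 n H \<union> qp_type2 n H \<union> qp_type3 d n H"

definition quasi_paving_rep :: "nat \<Rightarrow> nat \<Rightarrow> nat set set \<Rightarrow> bool" where
  "quasi_paving_rep d n H \<longleftrightarrow> 0 < n \<and> n \<le> d \<and> (\<forall>Hi\<in>H. Hi \<subseteq> {1..d}) \<and>
     (\<forall>H1\<in>H. \<forall>H2\<in>H. \<forall>H3\<in>H. H1 \<noteq> H2 \<and> H1 \<noteq> H3 \<and> H2 \<noteq> H3 \<longrightarrow> H1 \<inter> H2 \<inter> H3 = {})"

definition n_quasi_paving :: "nat \<Rightarrow> matroid \<Rightarrow> bool" where
  "n_quasi_paving n M \<longleftrightarrow> is_matroid M \<and>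
     (\<exists>d H. quasi_paving_rep d n H \<and> ground M = {1..d} \<and> circuits M = qp_circuits d n H)"

definition paving :: "matroid \<Rightarrow> bool" where
  "paving M \<longleftrightarrow> is_matroid M \<and>
     (\<forall>C\<in>circuits M. card C = matroid_rank M \<or> card C = matroid_rank M + 1)"

definition hyp_cand :: "matroid \<Rightarrow> nat set \<Rightarrow> bool" where
  "hyp_cand M X \<longleftrightarrow> X \<subseteq> ground M \<and> card X \<ge> matroid_rank M \<and>
     (\<forall>Y. Y \<subseteq> X \<and> card Y = matroid_rank M \<longrightarrow> Y \<in> circuits M)"

definition dependent_hyperplane :: "matroid \<Rightarrow> nat set \<Rightarrow> bool" where
  "dependent_hyperplane M X \<longleftrightarrow> hyp_cand M X \<and> (\<forall>Y. hyp_cand M Y \<and> X \<subseteq> Y \<longrightarrow> Y = X)"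

definition tame :: "matroid \<Rightarrow> bool" where
  "tame M \<longleftrightarrow> (\<forall>X Y Z. dependent_hyperplane M X \<and> dependent_hyperplane M Y \<and>
      dependent_hyperplane M Z \<and> X \<noteq> Y \<and> X \<noteq> Z \<and> Y \<noteq> Z \<longrightarrow> X \<inter> Y \<inter> Z = {})"

end

theory Submission
  imports Defs
begin

(* Pick a basis B0 and enlarge it to a set E0 that is maximal among those containing no
   type-1 circuit. The circuits of M inside E0 are then of types 2 and 3, of sizes n and n + 1,
   so M|E0 is paving; its dependent hyperplanes are the traces H_i \<inter> E0, which inherit the
   empty triple intersections, so M|E0 is tame. By maximality every remaining element a lies
   in a type-1 circuit T \<subseteq> H1 \<inter> H2 with T - {a} already present, and adding a is the
   principal extension along the trace of H1 \<inter> H2, a flat of rank n - 2 (for n = 2, a is a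
   loop and the flat is the set of loops). The bases match because in any basis one point of
   H1 \<inter> H2 may be exchanged for any other point of H1 \<inter> H2. *)

lemma indep_subset: "indep M X \<Longrightarrow> Y \<subseteq> X \<Longrightarrow> indep M Y"
  unfolding indep_def by blast

lemma basis_indep: "B \<in> bases M \<Longrightarrow> indep M B"
  unfolding indep_def by blast

lemma circuit_dependent: "C \<in> circuits M \<Longrightarrow> \<not> indep M C"
  unfolding circuits_def by blast

lemma indep_not_superset_circuit: "indep M X \<Longrightarrow> C \<in> circuits M \<Longrightarrow> \<not> C \<subseteq> X"
  using circuit_dependent indep_subset by blast

lemma finite_ground: "is_matroid M \<Longrightarrow> finite (ground M)"
  unfolding is_matroid_def by (elim conjE)

lemma bases_nonempty: "is_matroid M \<Longrightarrow> bases M \<noteq> {}"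
  unfolding is_matroid_def by (elim conjE)

lemma basis_subset_ground: "is_matroid M \<Longrightarrow> B \<in> bases M \<Longrightarrow> B \<subseteq> ground M"
  unfolding is_matroid_def by (elim conjE) blast

lemma indep_subset_ground: "is_matroid M \<Longrightarrow> indep M X \<Longrightarrow> X \<subseteq> ground M"
  unfolding indep_def using basis_subset_ground by blast

lemma finite_indep: "is_matroid M \<Longrightarrow> indep M X \<Longrightarrow> finite X"
  by (rule finite_subset[OF indep_subset_ground finite_ground])

lemma indep_empty: "is_matroid M \<Longrightarrow> indep M {}"
  unfolding indep_def using bases_nonempty by blast

lemma basis_exchange:
  "is_matroid M \<Longrightarrow> B1 \<in> bases M \<Longrightarrow> B2 \<in> bases M \<Longrightarrow> x \<in> B1 - B2 \<Longrightarrow>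
     \<exists>y\<in>B2 - B1. insert y (B1 - {x}) \<in> bases M"
  unfolding is_matroid_def by (elim conjE) simp

lemma dependent_contains_circuit:
  assumes "is_matroid M" "Y \<subseteq> ground M" "\<not> indep M Y"
  shows "\<exists>C\<in>circuits M. C \<subseteq> Y"
  using assms(2,3)
proof (induction "card Y" arbitrary: Y rule: less_induct)
  case less
  show ?case
  proof (cases "\<forall>D. D \<subset> Y \<longrightarrow> indep M D")
    case True
    then show ?thesis using less.prems unfolding circuits_def by blast
  next
    case False
    then obtain D where D: "D \<subset> Y" "\<not> indep M D" by blast
    have "finite Y" using less.prems(1) finite_ground[OF assms(1)] finite_subset by blast
    then have "card D < card Y" using D(1) psubset_card_mono by blast
    then show ?thesis using less.hyps[of D] D less.prems(1) by blast
  qed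
qed

lemma indep_iff_no_circuit:
  assumes "is_matroid M"
  shows "indep M X \<longleftrightarrow> X \<subseteq> ground M \<and> (\<forall>C\<in>circuits M. \<not> C \<subseteq> X)"
proof
  assume "X \<subseteq> ground M \<and> (\<forall>C\<in>circuits M. \<not> C \<subseteq> X)"
  then show "indep M X" using dependent_contains_circuit[OF assms, of X] by blast
qed (use indep_subset_ground[OF assms] indep_not_superset_circuit in blast)

lemma card_insert_Diff_singleton:
  "finite A \<Longrightarrow> x \<in> A \<Longrightarrow> y \<notin> A \<Longrightarrow> card (insert y (A - {x})) = card A"
  by (metis DiffD1 card_Suc_Diff1 card_insert_disjoint finite_Diff)

lemma circuit_Diff_singleton_indep: "C \<in> circuits M \<Longrightarrow> x \<in> C \<Longrightarrow> indep M (C - {x})"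
  unfolding circuits_def by auto

lemma bases_card_le:
  assumes "is_matroid M" "B1 \<in> bases M" "B2 \<in> bases M"
  shows "card B1 \<le> card B2"
  using assms(2)
proof (induction "card (B1 - B2)" arbitrary: B1 rule: less_induct)
  case less
  have fin: "finite B" if "B \<in> bases M" for B
    using finite_indep[OF assms(1) basis_indep[OF that]] .
  show ?case
  proof (cases "B1 \<subseteq> B2")
    case True
    then show ?thesis using fin[OF assms(3)] by (simp add: card_mono)
  next
    case False
    then obtain x where x: "x \<in> B1 - B2" by blast
    then obtain y where y: "y \<in> B2 - B1" and B: "insert y (B1 - {x}) \<in> bases M"
      using basis_exchange[OF assms(1) less.prems assms(3)] by blast
    have "card (insert y (B1 - {x})) = card B1"
      by (rule card_insert_Diff_singleton) (use x y fin[OF less.prems] in auto)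
    moreover have "card (insert y (B1 - {x}) - B2) < card (B1 - B2)"
      using x y fin[OF less.prems] by (auto intro!: psubset_card_mono)
    ultimately show ?thesis using less.hyps[OF _ B] by simp
  qed
qed

lemma bases_card_eq:
  "is_matroid M \<Longrightarrow> B1 \<in> bases M \<Longrightarrow> B2 \<in> bases M \<Longrightarrow> card B1 = card B2"
  using bases_card_le[of M B1 B2] bases_card_le[of M B2 B1] by simp

lemma indep_extends_into_basis:
  assumes "is_matroid M" "indep M Y" "B0 \<in> bases M"
  shows "\<exists>B\<in>bases M. Y \<subseteq> B \<and> B \<subseteq> Y \<union> B0"
proof -
  obtain B1 where "B1 \<in> bases M" "Y \<subseteq> B1" using assms(2) unfolding indep_def by blast
  then show ?thesis
  proof (induction "card (B1 - (Y \<union> B0))" arbitrary: B1 rule: less_induct)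
    case less
    show ?case
    proof (cases "B1 \<subseteq> Y \<union> B0")
      case True
      then show ?thesis using less.prems by blast
    next
      case False
      then obtain x where x: "x \<in> B1 - (Y \<union> B0)" by blast
      then obtain y where y: "y \<in> B0 - B1" and B: "insert y (B1 - {x}) \<in> bases M"
        using basis_exchange[OF assms(1) less.prems(1) assms(3)] by blast
      have "finite B1" using finite_indep[OF assms(1) basis_indep[OF less.prems(1)]] .
      then have "card (insert y (B1 - {x}) - (Y \<union> B0)) < card (B1 - (Y \<union> B0))"
        using x y by (auto intro!: psubset_card_mono)
      moreover have "Y \<subseteq> insert y (B1 - {x})" using x less.prems(2) by blast
      ultimately show ?thesis by (rule less.hyps[OF _ B])
    qed
  qed
qed

lemma finite_indep_cards: "finite X \<Longrightarrow> finite {card I |I. I \<subseteq> X \<and> indep M I}"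
  by (rule finite_subset[of _ "card ` Pow X"]) auto

lemma rk_ge:
  assumes "finite X" "I \<subseteq> X" "indep M I"
  shows "card I \<le> rk M X"
proof -
  have "finite {card I |I. I \<subseteq> X \<and> indep M I}"
    using assms(1) by (rule finite_indep_cards)
  then show ?thesis unfolding rk_def using assms by (intro Max_ge) blast+
qed

lemma rk_eqI:
  assumes "finite X" "I \<subseteq> X" "indep M I" "\<And>J. J \<subseteq> X \<Longrightarrow> indep M J \<Longrightarrow> card J \<le> card I"
  shows "rk M X = card I"
proof -
  have "finite {card I |I. I \<subseteq> X \<and> indep M I}"
    using assms(1) by (rule finite_indep_cards)
  then show ?thesis unfolding rk_def using assms by (intro Max_eqI) blast+
qed

lemma rk_superset_basis:
  assumes "is_matroid M" "B \<in> bases M" "B \<subseteq> X" "X \<subseteq> ground M"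
  shows "rk M X = card B"
proof (rule rk_eqI[OF finite_subset[OF assms(4) finite_ground[OF assms(1)]] assms(3)
      basis_indep[OF assms(2)]])
  fix J assume "indep M J"
  then obtain B' where "B' \<in> bases M" "J \<subseteq> B'" unfolding indep_def by blast
  moreover have "finite B'" using finite_indep[OF assms(1) basis_indep] calculation(1) .
  ultimately show "card J \<le> card B"
    using bases_card_eq[OF assms(1) _ assms(2)] card_mono by metis
qed

lemma card_basis: "is_matroid M \<Longrightarrow> B \<in> bases M \<Longrightarrow> card B = matroid_rank M"
  unfolding matroid_rank_def
  using rk_superset_basis[OF _ _ indep_subset_ground[OF _ basis_indep] order_refl] by simp

lemma bases_iff_indep_card:
  assumes "is_matroid M"
  shows "X \<in> bases M \<longleftrightarrow> indep M X \<and> card X = matroid_rank M"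
proof
  assume "indep M X \<and> card X = matroid_rank M"
  moreover obtain B where "B \<in> bases M" "X \<subseteq> B" using calculation unfolding indep_def by blast
  ultimately show "X \<in> bases M"
    using card_basis[OF assms] finite_indep[OF assms basis_indep] card_subset_eq by metis
next
  assume "X \<in> bases M"
  then show "indep M X \<and> card X = matroid_rank M"
    using basis_indep card_basis[OF assms] by simp
qed

text \<open>This is the restriction of M to E' only when E' contains a basis of M, which is the only
  case used.\<close>

definition restriction :: "matroid \<Rightarrow> nat set \<Rightarrow> matroid" where
  "restriction M E' = (E', {B \<in> bases M. B \<subseteq> E'})"

lemma ground_restriction [simp]: "ground (restriction M E') = E'"
  unfolding restriction_def ground_def by simp

lemma bases_restriction [simp]: "bases (restriction M E') = {B \<in> bases M. B \<subseteq> E'}"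
  unfolding restriction_def bases_def by simp

lemma restriction_ground:
  assumes "is_matroid M"
  shows "restriction M (ground M) = M"
proof -
  have "{B \<in> bases M. B \<subseteq> ground M} = bases M" using basis_subset_ground[OF assms] by blast
  then show ?thesis unfolding restriction_def by (simp add: ground_def bases_def)
qed

context
  fixes M :: matroid and B0 E' :: "nat set"
  assumes matroid: "is_matroid M" and B0: "B0 \<in> bases M" "B0 \<subseteq> E'"
begin

lemma indep_restriction: "indep (restriction M E') Y \<longleftrightarrow> Y \<subseteq> E' \<and> indep M Y"
proof
  assume "Y \<subseteq> E' \<and> indep M Y"
  moreover obtain B where "B \<in> bases M" "Y \<subseteq> B" "B \<subseteq> Y \<union> B0"
    using indep_extends_into_basis[OF matroid _ B0(1)] calculation by blast
  ultimately show "indep (restriction M E') Y" using B0(2) unfolding indep_def by simp blast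
qed (auto simp: indep_def)

lemma rk_restriction:
  assumes "Y \<subseteq> E'"
  shows "rk (restriction M E') Y = rk M Y"
proof -
  have "indep (restriction M E') I \<longleftrightarrow> indep M I" if "I \<subseteq> Y" for I
    using that assms indep_restriction by blast
  then show ?thesis unfolding rk_def by (intro arg_cong[where f = Max] Collect_cong) blast
qed

lemma circuits_restriction:
  assumes "E' \<subseteq> ground M"
  shows "circuits (restriction M E') = {C \<in> circuits M. C \<subseteq> E'}"
  unfolding circuits_def indep_restriction using assms by auto

lemma is_matroid_restriction:
  assumes "E' \<subseteq> ground M"
  shows "is_matroid (restriction M E')"
  unfolding is_matroid_def
proof (intro conjI ballI)
  show "finite (ground (restriction M E'))"
    using finite_subset[OF assms finite_ground[OF matroid]] by simp
  show "bases (restriction M E') \<noteq> {}" using B0 by auto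
next
  fix B1 B2 x assume B: "B1 \<in> bases (restriction M E')" "B2 \<in> bases (restriction M E')"
    and x: "x \<in> B1 - B2"
  then obtain y where "y \<in> B2 - B1" "insert y (B1 - {x}) \<in> bases M"
    using basis_exchange[OF matroid, of B1 B2 x] by auto
  then show "\<exists>y\<in>B2 - B1. insert y (B1 - {x}) \<in> bases (restriction M E')" using B by auto
qed auto

lemma matroid_rank_restriction:
  assumes "E' \<subseteq> ground M"
  shows "matroid_rank (restriction M E') = matroid_rank M"
  unfolding matroid_rank_def ground_restriction rk_restriction[OF order_refl]
  using rk_superset_basis[OF matroid B0(1)] B0(2) assms by simp

end

definition principal_ext_of_rank :: "matroid \<Rightarrow> int \<Rightarrow> matroid \<Rightarrow> bool" where
  "principal_ext_of_rank M k M' \<longleftrightarrow>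
     (\<exists>F a. flat M F \<and> int (rk M F) = k \<and> a \<notin> ground M \<and> M' = principal_ext M F a)"

lemma restriction_insert_loop:
  assumes matroid: "is_matroid M" and B0: "B0 \<in> bases M" "B0 \<subseteq> E'"
    and E': "E' \<subseteq> ground M" and loop: "{a} \<in> circuits M" and a: "a \<notin> E'"
  shows "principal_ext_of_rank (restriction M E') 0 (restriction M (insert a E'))"
proof -
  define F where "F = {x \<in> E'. \<not> indep M {x}}"
  have F: "F \<subseteq> E'" "finite F" using F_def finite_subset[OF E' finite_ground[OF matroid]] by auto
  have rk_F: "rk (restriction M E') F = 0"
  proof -
    have "card J \<le> card {}" if J: "J \<subseteq> F" "indep M J" for J
    proof -
      have "indep M {x}" if "x \<in> J" for x using indep_subset[OF J(2)] that by blast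
      then have "J = {}" using J(1) unfolding F_def by blast
      then show ?thesis by simp
    qed
    then show ?thesis
      using rk_eqI[OF F(2) _ indep_empty[OF matroid]] rk_restriction[OF matroid B0 F(1)] by simp
  qed
  have "flat (restriction M E') F"
    unfolding flat_def
  proof (intro conjI ballI)
    fix e assume e: "e \<in> ground (restriction M E') - F"
    then have "insert e F \<subseteq> E'" "indep M {e}" using F_def by auto
    then have "1 \<le> rk (restriction M E') (insert e F)"
      using rk_ge[of "insert e F" "{e}"] F(2) rk_restriction[OF matroid B0] by simp
    then show "rk (restriction M E') F < rk (restriction M E') (insert e F)" using rk_F by simp
  qed (use F in simp)
  moreover have "restriction M (insert a E') = principal_ext (restriction M E') F a"
  proof -
    have "b \<notin> F" if "B \<in> bases M" "b \<in> B" for B b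
      using indep_subset[OF basis_indep[OF that(1)]] that(2) unfolding F_def by blast
    then have "principal_ext (restriction M E') F a = (insert a E', {B \<in> bases M. B \<subseteq> E'})"
      unfolding principal_ext_def by auto
    moreover have "a \<notin> B" if "B \<in> bases M" for B
      using indep_not_superset_circuit[OF basis_indep[OF that] loop] by blast
    then have "{B \<in> bases M. B \<subseteq> insert a E'} = {B \<in> bases M. B \<subseteq> E'}" by blast
    ultimately show ?thesis unfolding restriction_def by simp
  qed
  ultimately show ?thesis
    unfolding principal_ext_of_rank_def using rk_F a by fastforce
qed

lemma chain_of_insertions:
  fixes f :: "'a set \<Rightarrow> 'b" and R :: "'b \<Rightarrow> 'b \<Rightarrow> bool"
  assumes "finite D"
    and "\<And>X a. X \<subseteq> D \<Longrightarrow> a \<in> D - X \<Longrightarrow> R (f (A \<union> X)) (f (insert a (A \<union> X)))"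
  shows "\<exists>(Ms :: nat \<Rightarrow> 'b) r. Ms 0 = f A \<and> Ms r = f (A \<union> D) \<and>
    (\<forall>i\<in>{1..r}. R (Ms (i - 1)) (Ms i))"
  using assms
proof (induction D rule: finite_induct)
  case empty
  show ?case by (intro exI[of _ "\<lambda>_. f A"] exI[of _ 0]) auto
next
  case (insert x D)
  have "R (f (A \<union> X)) (f (insert a (A \<union> X)))" if "X \<subseteq> D" "a \<in> D - X" for X a
    using that by (intro insert.prems) auto
  then obtain Ms and r :: nat where Ms: "Ms 0 = f A" "Ms r = f (A \<union> D)"
    "\<forall>i\<in>{1..r}. R (Ms (i - 1)) (Ms i)"
    using insert.IH by blast
  define Ms' where "Ms' = Ms(Suc r := f (insert x (A \<union> D)))"
  have last: "R (Ms r) (f (insert x (A \<union> D)))"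
    unfolding Ms(2) using insert.hyps(2) by (intro insert.prems) auto
  have "R (Ms' (i - 1)) (Ms' i)" if "i \<in> {1..Suc r}" for i
  proof (cases "i = Suc r")
    case True
    then show ?thesis using last by (simp add: Ms'_def)
  next
    case False
    then have "i \<in> {1..r}" "i - 1 \<noteq> Suc r" using that by auto
    then show ?thesis using Ms(3) by (simp add: Ms'_def)
  qed
  then show ?case using Ms(1) by (intro exI[of _ Ms'] exI[of _ "Suc r"]) (simp add: Ms'_def)
qed

lemma maximal_free_superset:
  assumes "finite E" "B \<subseteq> E" "\<forall>T\<in>\<T>. \<not> T \<subseteq> B"
  obtains E0 where "B \<subseteq> E0" "E0 \<subseteq> E" "\<forall>T\<in>\<T>. \<not> T \<subseteq> E0"
    "\<forall>a\<in>E - E0. \<exists>T\<in>\<T>. a \<in> T \<and> T - {a} \<subseteq> E0"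
proof -
  define free where "free = {X. B \<subseteq> X \<and> X \<subseteq> E \<and> (\<forall>T\<in>\<T>. \<not> T \<subseteq> X)}"
  have "free \<subseteq> Pow E" unfolding free_def by blast
  then have "finite free" using assms(1) by (simp add: finite_subset)
  moreover have "B \<in> free" unfolding free_def using assms(2,3) by simp
  ultimately obtain E0 where E0: "E0 \<in> free" and max: "\<And>X. X \<in> free \<Longrightarrow> E0 \<subseteq> X \<Longrightarrow> E0 = X"
    using finite_has_maximal2 by metis
  then have free: "B \<subseteq> E0" "E0 \<subseteq> E" "\<forall>T\<in>\<T>. \<not> T \<subseteq> E0" unfolding free_def by simp_all
  have "\<forall>a\<in>E - E0. \<exists>T\<in>\<T>. a \<in> T \<and> T - {a} \<subseteq> E0"
  proof
    fix a assume a: "a \<in> E - E0"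
    have "insert a E0 \<notin> free" using max[of "insert a E0"] a by auto
    then obtain T where "T \<in> \<T>" "T \<subseteq> insert a E0" using free a unfolding free_def by auto
    then show "\<exists>T\<in>\<T>. a \<in> T \<and> T - {a} \<subseteq> E0" using free(3) by blast
  qed
  then show ?thesis by (rule that[OF free])
qed

lemma type2_subsets_in_one_member:
  assumes "0 < n" "n \<le> card X" "\<And>Y. Y \<subseteq> X \<Longrightarrow> card Y = n \<Longrightarrow> Y \<in> qp_type2 n H"
  shows "\<exists>Hi\<in>H. X \<subseteq> Hi"
proof -
  obtain Y0 where Y0: "Y0 \<subseteq> X" "card Y0 = n" "finite Y0"
    using obtain_subset_with_card_n[OF assms(2)] by metis
  then have "Y0 \<in> qp_type2 n H" using assms(3) by blast
  then obtain Hi where Hi: "Hi \<in> H" "Y0 \<subseteq> Hi" and Y0_free: "\<forall>Z\<in>qp_type1 n H. \<not> Z \<subseteq> Y0"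
    unfolding qp_type2_def by blast
  have "Y0 \<noteq> {}" using Y0(2) assms(1) by auto
  then obtain y where y: "y \<in> Y0" by blast
  have "x \<in> Hi" if x: "x \<in> X - Y0" for x
  proof (rule ccontr)
    assume x_out: "x \<notin> Hi"
    have "card (insert x (Y0 - {y})) = card Y0"
      by (rule card_insert_Diff_singleton) (use Y0 x y in auto)
    moreover have "insert x (Y0 - {y}) \<subseteq> X" using Y0(1) x by blast
    ultimately have "insert x (Y0 - {y}) \<in> qp_type2 n H" using assms(3) Y0(2) by simp
    then obtain Hj where Hj: "Hj \<in> H" "insert x (Y0 - {y}) \<subseteq> Hj" unfolding qp_type2_def by blast
    have "Hi \<noteq> Hj" using Hj(2) x_out by blast
    moreover have "card (Y0 - {y}) = n - 1" using Y0(2) y by simp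
    ultimately have "Y0 - {y} \<in> qp_type1 n H"
      using Hi Hj unfolding qp_type1_def by blast
    then show False using Y0_free by blast
  qed
  then show ?thesis using Hi by blast
qed

locale rank_n_quasi_paving =
  fixes M :: matroid and d n :: nat and H :: "nat set set"
  assumes matroid: "is_matroid M" and rep: "quasi_paving_rep d n H"
    and ground_eq: "ground M = {1..d}" and circuits_eq: "circuits M = qp_circuits d n H"
    and rank_eq: "matroid_rank M = n"
begin

lemma n_pos: "0 < n"
  using rep unfolding quasi_paving_rep_def by simp

lemma member_subset_ground: "Hi \<in> H \<Longrightarrow> Hi \<subseteq> ground M"
  using rep ground_eq unfolding quasi_paving_rep_def by simp

lemma triple_intersection_empty:
  "H1 \<in> H \<Longrightarrow> H2 \<in> H \<Longrightarrow> H3 \<in> H \<Longrightarrow> H1 \<noteq> H2 \<Longrightarrow> H1 \<noteq> H3 \<Longrightarrow> H2 \<noteq> H3 \<Longrightarrow>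
    H1 \<inter> H2 \<inter> H3 = {}"
  using rep unfolding quasi_paving_rep_def by blast

lemma member_meeting_pair_contains_pair:
  assumes "H1 \<in> H" "H2 \<in> H" "H1 \<noteq> H2" "Hk \<in> H" "z \<in> H1 \<inter> H2 \<inter> Hk"
  shows "H1 \<inter> H2 \<subseteq> Hk"
proof -
  have "H1 \<inter> H2 \<inter> Hk = {}" if "Hk \<noteq> H1" "Hk \<noteq> H2"
    using triple_intersection_empty[OF assms(1,2,4,3)] that by blast
  then show ?thesis using assms(5) by blast
qed

lemma type1_meeting_pair_subset:
  assumes "H1 \<in> H" "H2 \<in> H" "H1 \<noteq> H2" "Z \<in> qp_type1 n H" "z \<in> Z \<inter> H1 \<inter> H2"
  shows "Z \<subseteq> H1 \<inter> H2"
proof -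
  obtain H3 H4 where H34: "H3 \<in> H" "H4 \<in> H" "H3 \<noteq> H4" "Z \<subseteq> H3 \<inter> H4"
    using assms(4) unfolding qp_type1_def by blast
  then have "H3 \<inter> H4 \<subseteq> H1" "H3 \<inter> H4 \<subseteq> H2"
    using member_meeting_pair_contains_pair[OF H34(1-3)] assms(1,2,5) by blast+
  then show ?thesis using H34(4) by blast
qed

lemma circuit_cases:
  "C \<in> circuits M \<Longrightarrow> C \<in> qp_type1 n H \<or> C \<in> qp_type2 n H \<or> C \<in> qp_type3 d n H"
  unfolding circuits_eq qp_circuits_def by simp

lemma type1_circuit: "C \<in> qp_type1 n H \<Longrightarrow> C \<in> circuits M"
  unfolding circuits_eq qp_circuits_def by simp

lemma type2_circuit: "C \<in> qp_type2 n H \<Longrightarrow> C \<in> circuits M"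
  unfolding circuits_eq qp_circuits_def by simp

lemma card_type1: "C \<in> qp_type1 n H \<Longrightarrow> card C = n - 1"
  unfolding qp_type1_def by simp

lemma subset_pair_type1:
  assumes "H1 \<in> H" "H2 \<in> H" "H1 \<noteq> H2" "Y \<subseteq> H1 \<inter> H2" "card Y = n - 1"
  shows "Y \<in> qp_type1 n H"
  unfolding qp_type1_def mem_Collect_eq
  by (intro conjI bexI[OF _ assms(1)] bexI[OF _ assms(2)]) (fact assms)+

lemma subset_pair_circuit:
  "H1 \<in> H \<Longrightarrow> H2 \<in> H \<Longrightarrow> H1 \<noteq> H2 \<Longrightarrow> Y \<subseteq> H1 \<inter> H2 \<Longrightarrow> card Y = n - 1 \<Longrightarrow>
    Y \<in> circuits M"
  by (rule type1_circuit[OF subset_pair_type1])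

lemma card_type2: "C \<in> qp_type2 n H \<Longrightarrow> card C = n"
  unfolding qp_type2_def by simp

lemma card_type3: "C \<in> qp_type3 d n H \<Longrightarrow> card C = n + 1"
  unfolding qp_type3_def by simp

lemma small_circuit_type1: "C \<in> circuits M \<Longrightarrow> card C < n \<Longrightarrow> C \<in> qp_type1 n H"
  using circuit_cases[of C] card_type2[of C] card_type3[of C] by auto

lemma circuit_card_n_type2: "C \<in> circuits M \<Longrightarrow> card C = n \<Longrightarrow> C \<in> qp_type2 n H"
  using circuit_cases[of C] card_type1[of C] card_type3[of C] n_pos by auto

lemma finite_circuit: "C \<in> circuits M \<Longrightarrow> finite C"
  unfolding circuits_def using finite_subset[OF _ finite_ground[OF matroid]] by simp

lemma indep_iff: "indep M X \<longleftrightarrow> X \<subseteq> ground M \<and> (\<forall>C\<in>circuits M. \<not> C \<subseteq> X)"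
  by (rule indep_iff_no_circuit[OF matroid])

lemma bases_iff: "X \<in> bases M \<longleftrightarrow> indep M X \<and> card X = n"
  using bases_iff_indep_card[OF matroid] rank_eq by simp

lemma indep_in_pair_card:
  assumes "H1 \<in> H" "H2 \<in> H" "H1 \<noteq> H2" "indep M Y" "Y \<subseteq> H1 \<inter> H2"
  shows "card Y \<le> n - 2"
proof (rule ccontr)
  assume "\<not> card Y \<le> n - 2"
  then have "n - 1 \<le> card Y" by simp
  then obtain W where W: "W \<subseteq> Y" "card W = n - 1" by (rule obtain_subset_with_card_n)
  then have "W \<in> circuits M" using assms(5) by (intro subset_pair_circuit[OF assms(1-3)]) auto
  then show False using indep_not_superset_circuit[OF assms(4)] W(1) by blast
qed

lemma member_basis_contains_type1:
  assumes "B \<in> bases M" "Hk \<in> H" "B \<subseteq> Hk"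
  shows "\<exists>Z\<in>qp_type1 n H. Z \<subseteq> B"
proof (rule ccontr)
  assume no_type1: "\<not> ?thesis"
  have "card B = n" using assms(1) bases_iff by simp
  then have "B \<in> qp_type2 n H" unfolding qp_type2_def using assms(2,3) no_type1 by blast
  then show False using circuit_dependent[OF type2_circuit] basis_indep[OF assms(1)] by simp
qed

context
  fixes H1 H2 L :: "nat set" and a b :: nat
  assumes pair: "H1 \<in> H" "H2 \<in> H" "H1 \<noteq> H2" and L: "L \<in> bases M"
    and b: "b \<in> L \<inter> H1 \<inter> H2" and a: "a \<in> H1 \<inter> H2" "a \<notin> L"
begin

lemma card_exchange_in_pair: "card (insert a (L - {b})) = n"
proof -
  have "finite L" using finite_indep[OF matroid basis_indep[OF L]] .
  then show ?thesis using card_insert_Diff_singleton[of L b a] b a(2) L bases_iff by simp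
qed

lemma type1_not_subset_exchange_in_pair:
  assumes C1: "C \<in> qp_type1 n H"
  shows "\<not> C \<subseteq> insert a (L - {b})"
proof
  assume CX: "C \<subseteq> insert a (L - {b})"
  have L_indep: "indep M L" using basis_indep[OF L] .
  have C: "C \<in> circuits M" using type1_circuit[OF C1] .
  have a_C: "a \<in> C" using CX indep_not_superset_circuit[OF L_indep C] by blast
  then have "C \<subseteq> H1 \<inter> H2" using type1_meeting_pair_subset[OF pair C1] a(1) by blast
  then have W: "insert b (C - {a}) \<subseteq> L \<inter> H1 \<inter> H2" using CX b by blast
  have "b \<notin> C" using CX a(2) b by auto
  then have "card (insert b (C - {a})) = n - 1"
    using card_insert_Diff_singleton[OF finite_circuit[OF C] a_C] card_type1[OF C1] by simp
  then have "insert b (C - {a}) \<in> circuits M"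
    using W by (intro subset_pair_circuit[OF pair]) auto
  then show False using indep_not_superset_circuit[OF L_indep] W by blast
qed

lemma type2_not_subset_exchange_in_pair:
  assumes C2: "C \<in> qp_type2 n H"
  shows "\<not> C \<subseteq> insert a (L - {b})"
proof
  assume CX: "C \<subseteq> insert a (L - {b})"
  have fin_L: "finite L" using finite_indep[OF matroid basis_indep[OF L]] .
  have C_X: "C = insert a (L - {b})"
    using card_subset_eq[OF _ CX] fin_L card_type2[OF C2] card_exchange_in_pair by simp
  obtain Hk where Hk: "Hk \<in> H" "C \<subseteq> Hk" and C_free: "\<forall>Z\<in>qp_type1 n H. \<not> Z \<subseteq> C"
    using C2 unfolding qp_type2_def by blast
  have "H1 \<inter> H2 \<subseteq> Hk"
    using member_meeting_pair_contains_pair[OF pair Hk(1)] a(1) Hk(2) C_X by blast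
  then have "L \<subseteq> Hk" using Hk(2) C_X b by blast
  then obtain Y where Y: "Y \<in> qp_type1 n H" "Y \<subseteq> L"
    using member_basis_contains_type1[OF L Hk(1)] by blast
  have b_Y: "b \<in> Y" using Y C_free C_X by blast
  then have "Y \<subseteq> H1 \<inter> H2" using type1_meeting_pair_subset[OF pair Y(1)] b by blast
  moreover have "card (insert a (Y - {b})) = n - 1"
    using card_insert_Diff_singleton[OF finite_subset[OF Y(2) fin_L] b_Y] card_type1[OF Y(1)]
      Y(2) a(2) by auto
  ultimately have "insert a (Y - {b}) \<in> qp_type1 n H"
    using a(1) by (intro subset_pair_type1[OF pair]) auto
  moreover have "insert a (Y - {b}) \<subseteq> C" using Y(2) C_X by blast
  ultimately show False using C_free by blast
qed

lemma basis_exchange_in_pair: "insert a (L - {b}) \<in> bases M"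
proof -
  have fin_L: "finite L" using finite_indep[OF matroid basis_indep[OF L]] .
  have "\<not> C \<subseteq> insert a (L - {b})" if C: "C \<in> circuits M" for C
  proof
    assume CX: "C \<subseteq> insert a (L - {b})"
    then have "card C \<noteq> n + 1" using card_mono[OF _ CX] fin_L card_exchange_in_pair by simp
    then show False
      using circuit_cases[OF C] card_type3 type1_not_subset_exchange_in_pair
        type2_not_subset_exchange_in_pair CX by blast
  qed
  moreover have "insert a (L - {b}) \<subseteq> ground M"
    using basis_subset_ground[OF matroid L] member_subset_ground[OF pair(1)] a(1) by blast
  ultimately show ?thesis unfolding bases_iff indep_iff using card_exchange_in_pair by blast
qed

end

lemma rk_subset_pair:
  assumes pair: "H1 \<in> H" "H2 \<in> H" "H1 \<noteq> H2"
    and "K \<subseteq> F" "F \<subseteq> H1 \<inter> H2" "indep M K" "card K = n - 2"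
  shows "rk M F = n - 2"
proof -
  have "finite F"
    using assms(5) member_subset_ground[OF pair(1)] finite_subset[OF _ finite_ground[OF matroid]]
    by blast
  then show ?thesis
    using rk_eqI[OF _ assms(4,6)] indep_in_pair_card[OF pair] assms(5,7) by fastforce
qed

lemma indep_insert_off_pair:
  assumes "3 \<le> n" and pair: "H1 \<in> H" "H2 \<in> H" "H1 \<noteq> H2"
    and K: "K \<subseteq> H1 \<inter> H2" "card K = n - 2" and e: "e \<in> ground M - H1 \<inter> H2"
  shows "indep M (insert e K)"
proof -
  have K_ground: "K \<subseteq> ground M" using K(1) member_subset_ground[OF pair(1)] by blast
  have fin_K: "finite K" using finite_subset[OF K_ground finite_ground[OF matroid]] .
  have "e \<notin> K" using K(1) e by blast
  then have card_eK: "card (insert e K) = n - 1" using K(2) fin_K assms(1) by simp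
  have "\<not> C \<subseteq> insert e K" if C: "C \<in> circuits M" for C
  proof
    assume C_eK: "C \<subseteq> insert e K"
    have "card C < n" using card_mono[OF _ C_eK] fin_K card_eK assms(1) by simp
    then have C1: "C \<in> qp_type1 n H" by (rule small_circuit_type1[OF C])
    then have C_eq: "C = insert e K"
      using card_subset_eq[OF _ C_eK] fin_K card_eK card_type1[OF C1] by simp
    obtain k where "k \<in> K" using K(2) assms(1) by fastforce
    then have "C \<subseteq> H1 \<inter> H2" using type1_meeting_pair_subset[OF pair C1] C_eq K(1) by blast
    then show False using C_eq e by blast
  qed
  then show ?thesis unfolding indep_iff using K_ground e by blast
qed

lemma restriction_insert_principal_ext_pair:
  assumes pair: "H1 \<in> H" "H2 \<in> H" "H1 \<noteq> H2"
    and T: "T \<in> qp_type1 n H" "T \<subseteq> H1 \<inter> H2" "a \<in> T" "T - {a} \<subseteq> E'" and a: "a \<notin> E'"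
  shows "restriction M (insert a E') = principal_ext (restriction M E') (E' \<inter> H1 \<inter> H2) a"
proof -
  let ?F = "E' \<inter> H1 \<inter> H2"
  let ?new = "{insert a (L - {b}) |L b. L \<in> {L \<in> bases M. L \<subseteq> E'} \<and> b \<in> L \<inter> ?F}"
  have old_or_new: "B \<in> {L \<in> bases M. L \<subseteq> E'} \<union> ?new" if B: "B \<in> bases M" "B \<subseteq> insert a E'" for B
  proof (cases "a \<in> B")
    case False
    then show ?thesis using B by blast
  next
    case True
    obtain b where b: "b \<in> T" "b \<notin> B"
      using indep_not_superset_circuit[OF basis_indep[OF B(1)] type1_circuit[OF T(1)]] by blast
    then have b_F: "b \<in> ?F" "b \<noteq> a" using T True by blast+
    define L where "L = insert b (B - {a})"
    have "L \<in> bases M"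
      unfolding L_def using basis_exchange_in_pair[OF pair B(1)] True T(2,3) b_F(1) b(2) by blast
    moreover have "L \<subseteq> E'" using B(2) b_F(1) unfolding L_def by blast
    moreover have "B = insert a (L - {b})" unfolding L_def using True b(2) b_F(2) by blast
    moreover have "b \<in> L \<inter> ?F" unfolding L_def using b_F(1) by blast
    ultimately show ?thesis by blast
  qed
  have new_basis: "insert a (L - {b}) \<in> bases M" if "L \<in> bases M" "L \<subseteq> E'" "b \<in> L \<inter> ?F" for L b
    using basis_exchange_in_pair[OF pair that(1)] that(2,3) T(2,3) a by blast
  have "{B \<in> bases M. B \<subseteq> insert a E'} = {L \<in> bases M. L \<subseteq> E'} \<union> ?new"
  proof (intro equalityI subsetI)
    fix B assume "B \<in> {L \<in> bases M. L \<subseteq> E'} \<union> ?new"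
    then show "B \<in> {B \<in> bases M. B \<subseteq> insert a E'}" using new_basis by blast
  qed (use old_or_new in blast)
  then show ?thesis unfolding principal_ext_def restriction_def by (simp add: ground_def bases_def)
qed

lemma flat_restriction_pair_trace:
  assumes "3 \<le> n" and pair: "H1 \<in> H" "H2 \<in> H" "H1 \<noteq> H2"
    and B0: "B0 \<in> bases M" "B0 \<subseteq> E'" and E': "E' \<subseteq> ground M"
    and K: "K \<subseteq> E' \<inter> H1 \<inter> H2" "card K = n - 2" "indep M K"
  shows "flat (restriction M E') (E' \<inter> H1 \<inter> H2)"
  unfolding flat_def
proof (intro conjI ballI)
  let ?F = "E' \<inter> H1 \<inter> H2"
  have fin_E': "finite E'" using finite_subset[OF E' finite_ground[OF matroid]] .
  have rk_F: "rk M ?F = n - 2" using rk_subset_pair[OF pair K(1) _ K(3,2)] by blast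
  fix e assume "e \<in> ground (restriction M E') - ?F"
  then have e: "e \<in> E'" "e \<notin> H1 \<inter> H2" by auto
  then have "indep M (insert e K)"
    using indep_insert_off_pair[OF assms(1) pair _ K(2)] K(1) E' by blast
  moreover have "e \<notin> K" using e(2) K(1) by blast
  then have "card (insert e K) = n - 1"
    using K(2) finite_subset[OF K(1)] fin_E' assms(1) by simp
  moreover have "insert e K \<subseteq> insert e ?F" using K(1) by blast
  moreover have "finite (insert e ?F)" using fin_E' by simp
  ultimately have "n - 1 \<le> rk M (insert e ?F)" using rk_ge by metis
  moreover have "insert e ?F \<subseteq> E'" using e(1) by blast
  ultimately show "rk (restriction M E') ?F < rk (restriction M E') (insert e ?F)"
    using rk_F rk_restriction[OF matroid B0] assms(1) by simp
qed auto

lemma restriction_insert_type1_point: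
  assumes B0: "B0 \<in> bases M" "B0 \<subseteq> E'" and E': "E' \<subseteq> ground M" and a: "a \<notin> E'"
    and T: "T \<in> qp_type1 n H" "a \<in> T" "T - {a} \<subseteq> E'"
  shows "principal_ext_of_rank (restriction M E') (int n - 2) (restriction M (insert a E'))"
proof -
  obtain H1 H2 where pair: "H1 \<in> H" "H2 \<in> H" "H1 \<noteq> H2" and T_pair: "T \<subseteq> H1 \<inter> H2"
    using T(1) unfolding qp_type1_def by blast
  have T_circuit: "T \<in> circuits M" by (rule type1_circuit[OF T(1)])
  have fin_T: "finite T" by (rule finite_circuit[OF T_circuit])
  have card_K: "card (T - {a}) = n - 2" using card_type1[OF T(1)] T(2) fin_T by simp
  have "2 \<le> n" using card_type1[OF T(1)] T(2) fin_T card_gt_0_iff by fastforce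
  then consider "n = 2" | "3 \<le> n" by linarith
  then show ?thesis
  proof cases
    case 1
    then have "T - {a} = {}" using card_K fin_T by simp
    then have "T = {a}" using T(2) by blast
    then show ?thesis using restriction_insert_loop[OF matroid B0 E' _ a] T_circuit 1 by simp
  next
    case 2
    let ?F = "E' \<inter> H1 \<inter> H2"
    have K: "T - {a} \<subseteq> ?F" "indep M (T - {a})"
      using T(3) T_pair circuit_Diff_singleton_indep[OF T_circuit T(2)] by auto
    then have "rk M ?F = n - 2" by (intro rk_subset_pair[OF pair _ _ _ card_K]) auto
    then have rk_F: "rk (restriction M E') ?F = n - 2" by (subst rk_restriction[OF matroid B0]) auto
    have "flat (restriction M E') ?F"
      by (rule flat_restriction_pair_trace[OF 2 pair B0 E' K(1) card_K K(2)])
    moreover have "restriction M (insert a E') = principal_ext (restriction M E') ?F a"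
      by (rule restriction_insert_principal_ext_pair[OF pair T(1) T_pair T(2,3) a])
    ultimately show ?thesis
      unfolding principal_ext_of_rank_def using rk_F 2 a by (intro exI[of _ ?F] exI[of _ a]) auto
  qed
qed

lemma type1_free_saturated_superset:
  obtains B0 E0 where "B0 \<in> bases M" "B0 \<subseteq> E0" "E0 \<subseteq> ground M"
    "\<forall>T\<in>qp_type1 n H. \<not> T \<subseteq> E0"
    "\<forall>a\<in>ground M - E0. \<exists>T\<in>qp_type1 n H. a \<in> T \<and> T - {a} \<subseteq> E0"
proof -
  obtain B0 where B0: "B0 \<in> bases M" using bases_nonempty[OF matroid] by blast
  then have "\<forall>T\<in>qp_type1 n H. \<not> T \<subseteq> B0"
    using indep_not_superset_circuit[OF basis_indep[OF B0] type1_circuit] by blast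
  with B0 show ?thesis
    using maximal_free_superset[OF finite_ground[OF matroid] basis_subset_ground[OF matroid B0]]
      that by metis
qed

context
  fixes B0 E0 :: "nat set"
  assumes B0: "B0 \<in> bases M" "B0 \<subseteq> E0" and E0: "E0 \<subseteq> ground M"
    and type1_free: "\<forall>T\<in>qp_type1 n H. \<not> T \<subseteq> E0"
begin

lemma paving_restriction_type1_free: "paving (restriction M E0)"
  unfolding paving_def matroid_rank_restriction[OF matroid B0 E0] rank_eq
    circuits_restriction[OF matroid B0 E0]
proof (intro conjI ballI)
  show "is_matroid (restriction M E0)" by (rule is_matroid_restriction[OF matroid B0 E0])
  fix C assume "C \<in> {C \<in> circuits M. C \<subseteq> E0}"
  then have "C \<in> circuits M" "C \<notin> qp_type1 n H" using type1_free by auto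
  then show "card C = n \<or> card C = n + 1"
    using circuit_cases[of C] card_type2[of C] card_type3[of C] by auto
qed

lemma dependent_hyperplane_restriction_type1_free:
  assumes "dependent_hyperplane (restriction M E0) X"
  shows "\<exists>Hi\<in>H. X = Hi \<inter> E0"
proof -
  let ?M0 = "restriction M E0"
  have hyp_cand_iff: "hyp_cand ?M0 Y \<longleftrightarrow>
      Y \<subseteq> E0 \<and> n \<le> card Y \<and> (\<forall>Z. Z \<subseteq> Y \<and> card Z = n \<longrightarrow> Z \<in> circuits M)" for Y
    unfolding hyp_cand_def matroid_rank_restriction[OF matroid B0 E0] rank_eq
      circuits_restriction[OF matroid B0 E0] by auto
  have "hyp_cand ?M0 X" using assms unfolding dependent_hyperplane_def by simp
  then have X: "X \<subseteq> E0" "n \<le> card X" "\<forall>Z. Z \<subseteq> X \<and> card Z = n \<longrightarrow> Z \<in> circuits M"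
    unfolding hyp_cand_iff by simp_all
  have "Z \<in> qp_type2 n H" if "Z \<subseteq> X" "card Z = n" for Z
  proof -
    have "Z \<in> circuits M" using X(3) that by blast
    then show ?thesis using that(2) by (rule circuit_card_n_type2)
  qed
  from type2_subsets_in_one_member[OF n_pos X(2) this]
  obtain Hi where Hi: "Hi \<in> H" "X \<subseteq> Hi" by blast
  have "hyp_cand ?M0 (Hi \<inter> E0)"
    unfolding hyp_cand_iff
  proof (intro conjI allI impI)
    have "finite (Hi \<inter> E0)" using finite_subset[OF E0 finite_ground[OF matroid]] by simp
    then show "n \<le> card (Hi \<inter> E0)" using X(1,2) Hi(2) card_mono[of "Hi \<inter> E0" X] by simp
    fix Z assume Z: "Z \<subseteq> Hi \<inter> E0 \<and> card Z = n"
    then have "\<forall>T\<in>qp_type1 n H. \<not> T \<subseteq> Z" using type1_free by blast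
    then have "Z \<in> qp_type2 n H"
      unfolding qp_type2_def mem_Collect_eq using Z by (intro conjI bexI[OF _ Hi(1)]) auto
    then show "Z \<in> circuits M" by (rule type2_circuit)
  qed simp
  moreover have "X \<subseteq> Hi \<inter> E0" using X(1) Hi(2) by blast
  moreover have "\<forall>Y. hyp_cand ?M0 Y \<and> X \<subseteq> Y \<longrightarrow> Y = X"
    using assms unfolding dependent_hyperplane_def by simp
  ultimately have "X = Hi \<inter> E0" by blast
  then show ?thesis using Hi(1) by blast
qed

lemma tame_restriction_type1_free: "tame (restriction M E0)"
  unfolding tame_def
proof (intro allI impI, elim conjE)
  fix X Y Z
  assume dh: "dependent_hyperplane (restriction M E0) X" "dependent_hyperplane (restriction M E0) Y"
      "dependent_hyperplane (restriction M E0) Z"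
    and ne: "X \<noteq> Y" "X \<noteq> Z" "Y \<noteq> Z"
  obtain Hx where Hx: "Hx \<in> H" "X = Hx \<inter> E0"
    using dependent_hyperplane_restriction_type1_free[OF dh(1)] by blast
  obtain Hy where Hy: "Hy \<in> H" "Y = Hy \<inter> E0"
    using dependent_hyperplane_restriction_type1_free[OF dh(2)] by blast
  obtain Hz where Hz: "Hz \<in> H" "Z = Hz \<inter> E0"
    using dependent_hyperplane_restriction_type1_free[OF dh(3)] by blast
  have "Hx \<noteq> Hy" "Hx \<noteq> Hz" "Hy \<noteq> Hz" using ne Hx(2) Hy(2) Hz(2) by auto
  then have "Hx \<inter> Hy \<inter> Hz = {}" by (rule triple_intersection_empty[OF Hx(1) Hy(1) Hz(1)])
  then show "X \<inter> Y \<inter> Z = {}" using Hx(2) Hy(2) Hz(2) by blast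
qed

end

end

theorem proposition3p7:
  fixes n :: nat and M :: matroid
  assumes "n_quasi_paving n M"
    and "matroid_rank M = n"
  shows "\<exists>(Ms :: nat \<Rightarrow> matroid) r. paving (Ms 0) \<and> tame (Ms 0) \<and> Ms r = M \<and>
           (\<forall>i\<in>{1..r}. \<exists>F a. flat (Ms (i - 1)) F \<and>
               int (rk (Ms (i - 1)) F) = int n - 2 \<and>
               a \<notin> ground (Ms (i - 1)) \<and>
               Ms i = principal_ext (Ms (i - 1)) F a)"
proof -
  obtain d H where "is_matroid M" "quasi_paving_rep d n H" "ground M = {1..d}"
    "circuits M = qp_circuits d n H"
    using assms(1) unfolding n_quasi_paving_def by blast
  then interpret rank_n_quasi_paving M d n H using assms(2) by unfold_locales
  obtain B0 E0 where B0: "B0 \<in> bases M"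
    and E0: "B0 \<subseteq> E0" "E0 \<subseteq> ground M" "\<forall>T\<in>qp_type1 n H. \<not> T \<subseteq> E0"
    and saturated: "\<forall>a\<in>ground M - E0. \<exists>T\<in>qp_type1 n H. a \<in> T \<and> T - {a} \<subseteq> E0"
    by (rule type1_free_saturated_superset)
  let ?step = "\<lambda>M M'. principal_ext_of_rank M (int n - 2) M'"
  have "?step (restriction M (E0 \<union> X)) (restriction M (insert a (E0 \<union> X)))"
    if X: "X \<subseteq> ground M - E0" and a: "a \<in> ground M - E0 - X" for X a
  proof -
    obtain T where T: "T \<in> qp_type1 n H" "a \<in> T" "T - {a} \<subseteq> E0" using saturated a by blast
    have "B0 \<subseteq> E0 \<union> X" "E0 \<union> X \<subseteq> ground M" "a \<notin> E0 \<union> X" "T - {a} \<subseteq> E0 \<union> X"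
      using E0 X a T(3) by auto
    then show ?thesis by (rule restriction_insert_type1_point[OF B0 _ _ _ T(1,2)])
  qed
  from chain_of_insertions[where f = "restriction M" and A = E0 and R = ?step,
      OF finite_Diff[OF finite_ground[OF matroid]] this]
  obtain Ms :: "nat \<Rightarrow> matroid" and r :: nat
    where Ms: "Ms 0 = restriction M E0" "Ms r = restriction M (E0 \<union> (ground M - E0))"
      "\<forall>i\<in>{1..r}. ?step (Ms (i - 1)) (Ms i)"
    by blast
  have "Ms r = M" using Ms(2) E0(2) restriction_ground[OF matroid] by (simp add: Un_absorb1)
  moreover have "paving (Ms 0)" "tame (Ms 0)"
    using Ms(1) paving_restriction_type1_free[OF B0 E0] tame_restriction_type1_free[OF B0 E0]
    by simp_all
  ultimately show ?thesis
    using Ms(3) unfolding principal_ext_of_rank_def by (intro exI[of _ Ms] exI[of _ r]) simp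
qed

end
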